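(* Let $i$ be a positive integer. The number of points $P\in\mathcal X_3(\overline{\mathbb F}_{q^2})\setminus\mathcal O$ such that $\alpha(P)$ has $\mathcal P$-order $i$ equals $(q+1)^2\varphi(i+1)$ if $\gcd(i+1,p)=1$, and $0$ otherwise. Moreover, a point $P\in\mathcal X_3(\overline{\mathbb F}_{q^2})\setminus\mathcal O$ is $\mathbb F_{q^2}$-rational if and only if $\alpha(P)^2-\alpha(P)+1=0$ or the $\mathcal P$-order $i$ of $\alpha(P)$ satisfies that $i+1$ divides $m$.
   Context: $\varphi$ is Euler's totient function. Let $q$ be a prime power with $q\equiv2\pmod3$, $p$ its characteristic, $m=(q+1)/3$, and let $\mathcal X_3$ be the nonsingular projective model (defined over $\mathbb F_{q^2}$) of the plane curve $y^{q+1}+x^{2m}+x^m=0$. Let $\mathcal O_0$ be the $m$ points centered at the singular point $(0,0)$ and $\mathcal O_\infty$ the $m$ points over the point at infinity; other points have affine coordinates $(a,b)$, $a\ne0$, and are denoted $P_{(a,b)}$. Let $\mathcal O_m=\{P_{(a,0)}:a^m+1=0\}$, $\mathcal O=\mathcal O_0\cup\mathcal O_\infty\cup\mathcal O_m$, and for $P=P_{(a,b)}\notin\mathcal O$, $\alpha(P)=a^m/(1+a^m)$. Fix a primitive cube root of unity $\zeta_3\in\mathbb F_{q^2}$, let $\mathcal P_i(s)=\frac{(s+\zeta_3)^{3i}-(s+\zeta_3^2)^{3i}}{3(\zeta_3-\zeta_3^2)s(s-1)}$, and for $\alpha\in\overline{\mathbb F}_{q^2}\setminus\{0,1,-\zeta_3,-\zeta_3^2\}$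 let the $\mathcal P$-order of $\alpha$ be the smallest positive integer $i$ with $\mathcal P_{i+1}(\alpha)=0$. *)

theory Defs
  imports "HOL-Computational_Algebra.Polynomial" "HOL-Number_Theory.Number_Theory"
begin

text \<open>The polynomial (rational function) P_i(s), evaluated at s (only used for s not 0 or 1).\<close>
definition Ppoly :: "'a::field \<Rightarrow> nat \<Rightarrow> 'a \<Rightarrow> 'a" where
  "Ppoly z i s = ((s + z) ^ (3 * i) - (s + z ^ 2) ^ (3 * i)) /
                 (3 * (z - z ^ 2) * s * (s - 1))"

definition has_P_order :: "'a::field \<Rightarrow> 'a \<Rightarrow> nat \<Rightarrow> bool" where
  "has_P_order z \<alpha> i \<longleftrightarrow>
     \<alpha> \<notin> {0, 1, - z, - (z ^ 2)} \<and> 0 < i \<and> Ppoly z (i + 1) \<alpha> = 0 \<and>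
     (\<forall>j. 0 < j \<and> j < i \<longrightarrow> Ppoly z (j + 1) \<alpha> \<noteq> 0)"

text \<open>Affine points (a,b), a nonzero, of y^(q+1) + x^(2m) + x^m = 0 outside O_m;
  these are in bijection with the points of X_3 outside O.\<close>
definition curve_pt_notO :: "nat \<Rightarrow> nat \<Rightarrow> 'a::field \<Rightarrow> 'a \<Rightarrow> bool" where
  "curve_pt_notO q m a b \<longleftrightarrow>
     b ^ (q + 1) + a ^ (2 * m) + a ^ m = 0 \<and> a \<noteq> 0 \<and> a ^ m + 1 \<noteq> 0"

definition alpha_pt :: "nat \<Rightarrow> 'a::field \<Rightarrow> 'a" where
  "alpha_pt m a = a ^ m / (1 + a ^ m)"

end

theory Submission
  imports Defs
begin

text \<open>
  Write \<open>u = a\<^sup>m\<close>. On the curve \<open>b\<^bsup>q+1\<^esup> = -(u\<^sup>2 + u)\<close> and \<open>\<alpha> = u / (1 + u)\<close>, so above each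
  \<open>\<alpha> \<notin> {0, 1}\<close> lie exactly \<open>m (q + 1)\<close> points: the characteristic divides neither \<open>m\<close> nor \<open>q + 1\<close>.
  The Moebius transformation \<open>\<mu>(s) = (s + \<zeta>) / (s + \<zeta>\<^sup>2)\<close> maps the admissible \<open>\<alpha>\<close> bijectively
  onto \<open>{t. t \<noteq> 0 \<and> t\<^sup>3 \<noteq> 1}\<close>, and \<open>\<P>\<^sub>i(\<alpha>) = 0\<close> iff \<open>\<mu>(\<alpha>)\<^bsup>3i\<^esup> = 1\<close>; so \<open>\<alpha>\<close> has
  \<open>\<P>\<close>-order \<open>i\<close> iff \<open>\<mu>(\<alpha>)\<^sup>3\<close> has multiplicative order \<open>i + 1\<close>. There are \<open>\<phi>(i + 1)\<close> roots
  of unity of that order if \<open>p\<close> does not divide \<open>i + 1\<close> and none otherwise, each with three cube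
  roots; this gives \<open>3m (q + 1) \<phi>(i + 1) = (q + 1)\<^sup>2 \<phi>(i + 1)\<close> points.

  For rationality, \<open>a\<close> and \<open>b\<close> lie in the field with \<open>q\<^sup>2\<close> elements iff \<open>u\<^sup>q = u\<close> or
  \<open>u\<^sup>2 + u + 1 = 0\<close>, i.e. iff \<open>\<alpha>\<^sup>q = \<alpha>\<close> or \<open>\<alpha>\<^sup>2 - \<alpha> + 1 = 0\<close>. Since \<open>\<zeta>\<^sup>q = \<zeta>\<^sup>2\<close>, the Frobenius
  gives \<open>\<mu>(\<alpha>)\<^sup>q = 1 / \<mu>(\<alpha>\<^sup>q)\<close>, so \<open>\<alpha>\<^sup>q = \<alpha>\<close> iff \<open>\<mu>(\<alpha>)\<^bsup>q+1\<^esup> = (\<mu>(\<alpha>)\<^sup>3)\<^sup>m = 1\<close>, i.e. iff the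
  \<open>\<P>\<close>-order of \<open>\<alpha>\<close> plus one divides \<open>m\<close>.
\<close>

section \<open>Roots of unity\<close>

lemma size_proots_alg_closed:
  fixes p :: "'a::alg_closed_field poly"
  shows "size (proots p) = degree p"
proof (cases "p = 0")
  case False
  then obtain A where A: "size A = degree p" "p = Polynomial.smult (lead_coeff p) (\<Prod>x\<in>#A. [:-x, 1:])"
    using alg_closed_imp_factorization by blast
  have "proots (\<Prod>x\<in>#A. [:-x, 1:]) = A"
  proof (induction A)
    case (add x A)
    have "(\<Prod>y\<in>#A. [:-y, 1:]) \<noteq> 0"
      by auto
    then show ?case
      using add.IH by (simp add: proots_mult del: mult_pCons_left)
  qed simp
  then have "proots p = A"
    using False by (subst A(2)) simp
  then show ?thesis using A(1) by simp
qed simp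

lemma order_le_1_if_poly_pderiv_nonzero:
  fixes p :: "'a::idom poly"
  assumes "poly (pderiv p) x \<noteq> 0"
  shows "Polynomial.order x p \<le> 1"
proof (rule ccontr)
  assume "\<not> Polynomial.order x p \<le> 1"
  then have "[:-x, 1:] ^ Suc 1 dvd [:-x, 1:] ^ Polynomial.order x p"
    by (intro le_imp_power_dvd) simp
  then have "[:-x, 1:] ^ Suc 1 dvd p"
    using order_1 dvd_trans by blast
  then obtain r where "p = [:-x, 1:] ^ Suc 1 * r" by blast
  then have "poly (pderiv p) x = 0"
    by (simp only: lemma_order_pderiv1 poly_add poly_mult poly_power poly_smult) simp
  with assms show False by contradiction
qed

lemma card_nth_roots_alg_closed:
  fixes c :: "'a::alg_closed_field"
  assumes "c \<noteq> 0" and "of_nat n \<noteq> (0::'a)"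
  shows "card {x. x ^ n = c} = n"
proof -
  define p where "p = Polynomial.monom 1 n + [:-c:]"
  have "n > 0"
    using assms(2) by (rule contrapos_np) simp
  then have deg: "degree p = n"
    by (simp add: p_def degree_monom_eq degree_add_eq_left)
  with \<open>n > 0\<close> have "p \<noteq> 0"
    by auto
  have roots: "{x. poly p x = 0} = {x. x ^ n = c}"
    by (simp add: p_def poly_monom)
  have simple: "Polynomial.order x p \<le> 1" for x
  proof (cases "x = 0")
    case False
    then show ?thesis
      using assms(2) by (intro order_le_1_if_poly_pderiv_nonzero) (simp add: p_def pderiv_add pderiv_monom poly_monom)
  next
    case True
    have "poly p 0 \<noteq> 0"
      using assms(1) \<open>n > 0\<close> by (simp add: p_def poly_monom power_0_left)
    then show ?thesis
      using True by (simp add: order_0I)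
  qed
  have "proots p = mset_set {x. poly p x = 0}"
  proof (rule multiset_eqI)
    fix x
    show "count (proots p) x = count (mset_set {x. poly p x = 0}) x"
      using simple[of x] \<open>p \<noteq> 0\<close> poly_roots_finite[OF \<open>p \<noteq> 0\<close>]
      by (auto simp: order_root le_Suc_eq)
  qed
  then show ?thesis
    using size_proots_alg_closed[of p] deg roots by simp
qed

lemma cube_root_unity_sum:
  fixes z :: "'a::idom"
  assumes "z ^ 3 = 1" and "z \<noteq> 1"
  shows "z ^ 2 + z + 1 = 0"
proof -
  have "(z - 1) * (z ^ 2 + z + 1) = z ^ 3 - 1"
    by (simp add: algebra_simps power2_eq_square power3_eq_cube)
  then show ?thesis
    using assms by simp
qed

lemma cube_eq_1_if_quadratic_eq_0:
  fixes u :: "'a::comm_ring_1"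
  assumes "u ^ 2 + u + 1 = 0"
  shows "u ^ 3 = 1"
proof -
  have "u ^ 3 - 1 = (u - 1) * (u ^ 2 + u + 1)"
    by (simp add: algebra_simps power2_eq_square power3_eq_cube)
  with assms show ?thesis
    by simp
qed

lemma cube_roots_unity_cases:
  fixes z x :: "'a::idom"
  assumes "z ^ 3 = 1" and "z \<noteq> 1" and "x ^ 3 = 1"
  shows "x = 1 \<or> x = z \<or> x = z ^ 2"
proof -
  have "(x - 1) * (x - z) * (x - z ^ 2) = x ^ 3 - 1 - (z ^ 2 + z + 1) * (x ^ 2 - x) + (z ^ 3 - 1) * (x - 1)"
    by (simp add: algebra_simps power2_eq_square power3_eq_cube)
  then have "(x - 1) * (x - z) * (x - z ^ 2) = 0"
    using assms cube_root_unity_sum[OF assms(1,2)] by simp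
  then show ?thesis
    by auto
qed

section \<open>Multiplicative order\<close>

definition has_mult_order :: "'a::monoid_mult \<Rightarrow> nat \<Rightarrow> bool" where
  "has_mult_order s n \<longleftrightarrow> 0 < n \<and> s ^ n = 1 \<and> (\<forall>j. 0 < j \<and> j < n \<longrightarrow> s ^ j \<noteq> 1)"

lemma has_mult_order_power_eq_1_iff:
  assumes "has_mult_order s d"
  shows "s ^ n = 1 \<longleftrightarrow> d dvd n"
proof
  have d: "0 < d" "s ^ d = 1" "\<And>j. 0 < j \<Longrightarrow> j < d \<Longrightarrow> s ^ j \<noteq> 1"
    using assms unfolding has_mult_order_def by auto
  assume "s ^ n = 1"
  have "s ^ n = s ^ (d * (n div d) + n mod d)"
    by simp
  also have "\<dots> = (s ^ d) ^ (n div d) * s ^ (n mod d)"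
    by (simp only: power_add power_mult)
  finally have "s ^ (n mod d) = 1"
    using d(2) \<open>s ^ n = 1\<close> by simp
  then have "n mod d = 0"
    using d(1) d(3)[of "n mod d"] by auto
  then show "d dvd n" by (simp add: dvd_eq_mod_eq_0)
next
  assume "d dvd n"
  then show "s ^ n = 1"
    using assms by (auto simp: has_mult_order_def power_mult)
qed

lemma has_mult_order_nonzero: "has_mult_order (s::'a::semiring_1) n \<Longrightarrow> s \<noteq> 0"
  by (auto simp: has_mult_order_def power_0_left)

lemma has_mult_order_ne_1: "has_mult_order s n \<Longrightarrow> 1 < n \<Longrightarrow> s \<noteq> 1"
  by (auto simp: has_mult_order_def)

lemma has_mult_order_Suc_iff:
  assumes "s \<noteq> 1"
  shows "has_mult_order s (i + 1) \<longleftrightarrow> s ^ (i + 1) = 1 \<and> (\<forall>j. 0 < j \<and> j < i \<longrightarrow> s ^ (j + 1) \<noteq> 1)"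
proof -
  have "(\<forall>j. 0 < j \<and> j < i + 1 \<longrightarrow> s ^ j \<noteq> 1) \<longleftrightarrow> (\<forall>j. 0 < j \<and> j < i \<longrightarrow> s ^ (j + 1) \<noteq> 1)"
  proof
    assume unshifted: "\<forall>j. 0 < j \<and> j < i + 1 \<longrightarrow> s ^ j \<noteq> 1"
    show "\<forall>j. 0 < j \<and> j < i \<longrightarrow> s ^ (j + 1) \<noteq> 1"
      using unshifted[rule_format, of "_ + 1"] by simp
  next
    assume shifted: "\<forall>j. 0 < j \<and> j < i \<longrightarrow> s ^ (j + 1) \<noteq> 1"
    show "\<forall>j. 0 < j \<and> j < i + 1 \<longrightarrow> s ^ j \<noteq> 1"
    proof (intro allI impI)
      fix j
      assume j: "0 < j \<and> j < i + 1"
      show "s ^ j \<noteq> 1"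
      proof (cases "j = 1")
        case False
        with j have "0 < j - 1 \<and> j - 1 < i"
          by auto
        with shifted have "s ^ (j - 1 + 1) \<noteq> 1"
          by blast
        with j show ?thesis
          by simp
      qed (use assms in simp)
    qed
  qed
  then show ?thesis
    by (simp add: has_mult_order_def)
qed

lemma has_mult_order_unique: "has_mult_order s d \<Longrightarrow> has_mult_order s e \<Longrightarrow> d = e"
  using has_mult_order_power_eq_1_iff[of s d e] has_mult_order_power_eq_1_iff[of s e d]
  by (auto simp: has_mult_order_def intro: dvd_antisym)

lemma has_mult_order_exists_dvd:
  assumes "s ^ n = 1" and "n > 0"
  obtains d where "has_mult_order s d" and "d dvd n"
proof -
  define d where "d = (LEAST d. 0 < d \<and> s ^ d = 1)"
  have "0 < d \<and> s ^ d = 1"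
    unfolding d_def by (rule LeastI[of _ n]) (use assms in auto)
  moreover have "\<forall>j. 0 < j \<and> j < d \<longrightarrow> s ^ j \<noteq> 1"
    unfolding d_def using not_less_Least by blast
  ultimately have "has_mult_order s d"
    unfolding has_mult_order_def by blast
  moreover from this have "d dvd n"
    using assms(1) by (simp add: has_mult_order_power_eq_1_iff)
  ultimately show thesis
    by (rule that)
qed

lemma roots_of_unity_eq_UN_has_mult_order:
  assumes "n > 0"
  shows "{s::'a::monoid_mult. s ^ n = 1} = (\<Union>d\<in>{d. d dvd n}. {s. has_mult_order s d})"
proof (intro equalityI subsetI)
  fix s :: 'a
  assume "s \<in> {s. s ^ n = 1}"
  then obtain d where "has_mult_order s d" "d dvd n"
    using has_mult_order_exists_dvd assms by blast
  then show "s \<in> (\<Union>d\<in>{d. d dvd n}. {s. has_mult_order s d})"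
    by blast
qed (auto simp: has_mult_order_power_eq_1_iff)

lemma card_has_mult_order_alg_closed:
  assumes "of_nat n \<noteq> (0::'a::alg_closed_field)"
  shows "card {s::'a. has_mult_order s n} = totient n"
  using assms
proof (induction n rule: less_induct)
  case (less n)
  have "n > 0"
    using less.prems by (rule contrapos_np) simp
  define D where "D = {d. d dvd n}"
  have "finite D" "n \<in> D"
    using \<open>n > 0\<close> by (simp_all add: D_def)
  have roots: "{s::'a. s ^ n = 1} = (\<Union>d\<in>D. {s. has_mult_order s d})"
    unfolding D_def using \<open>n > 0\<close> by (rule roots_of_unity_eq_UN_has_mult_order)
  have card_roots: "card {s::'a. s ^ n = 1} = n"
    using less.prems by (simp add: card_nth_roots_alg_closed)
  then have "finite {s::'a. s ^ n = 1}"
    using \<open>n > 0\<close> by (intro card_ge_0_finite) simp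
  then have fin: "finite {s::'a. has_mult_order s d}" if "d \<in> D" for d
    by (rule finite_subset[rotated]) (use that roots in blast)
  have "n = card {s::'a. s ^ n = 1}"
    using card_roots by simp
  also have "\<dots> = (\<Sum>d\<in>D. card {s::'a. has_mult_order s d})"
    unfolding roots by (rule card_UN_disjoint) (use \<open>finite D\<close> fin has_mult_order_unique in auto)
  also have "\<dots> = card {s::'a. has_mult_order s n} + (\<Sum>d\<in>D - {n}. totient d)"
  proof -
    have "card {s::'a. has_mult_order s d} = totient d" if "d \<in> D - {n}" for d
    proof (rule less.IH)
      show "d < n"
        using that \<open>n > 0\<close> by (auto simp: D_def dest: dvd_imp_le)
      show "of_nat d \<noteq> (0::'a)"
        using that less.prems by (auto simp: D_def of_nat_eq_0_iff_char_dvd intro: dvd_trans)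
    qed
    then show ?thesis
      using \<open>finite D\<close> \<open>n \<in> D\<close> by (simp add: sum.remove)
  qed
  finally have "n = card {s::'a. has_mult_order s n} + (\<Sum>d\<in>D - {n}. totient d)" .
  moreover have "n = totient n + (\<Sum>d\<in>D - {n}. totient d)"
    using totient_divisor_sum[of n] sum.remove[OF \<open>finite D\<close> \<open>n \<in> D\<close>, of totient]
    by (simp add: D_def)
  ultimately show ?case
    by linarith
qed

section \<open>Prime characteristic\<close>

lemma freshmans_dream_minus:
  assumes "prime CHAR('a)" and "m = CHAR('a) ^ n"
  shows "(- x :: 'a::comm_ring_1) ^ m = - (x ^ m)"
proof -
  have "m > 0"
    using assms prime_gt_0_nat by simp
  then have "x ^ m + (- x) ^ m = 0"
    using freshmans_dream'[OF assms, of x "- x"] by (simp add: power_0_left)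
  then show ?thesis
    by (simp add: eq_neg_iff_add_eq_0 add.commute)
qed

lemma freshmans_dream_diff:
  assumes "prime CHAR('a)" and "m = CHAR('a) ^ n"
  shows "(x - y :: 'a::comm_ring_1) ^ m = x ^ m - y ^ m"
  using freshmans_dream'[OF assms, of x "- y"] freshmans_dream_minus[OF assms, of y] by simp

lemma power_CHAR_eq_1_iff:
  assumes "prime CHAR('a)"
  shows "(s :: 'a::idom) ^ CHAR('a) = 1 \<longleftrightarrow> s = 1"
  using freshmans_dream_diff[OF assms, of "CHAR('a)" 1 s 1] by auto

lemma has_mult_order_imp_not_CHAR_dvd:
  assumes "prime CHAR('a)" and "has_mult_order (s :: 'a::idom) n"
  shows "\<not> CHAR('a) dvd n"
proof
  assume "CHAR('a) dvd n"
  then obtain e where n: "n = CHAR('a) * e" ..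
  then have "(s ^ e) ^ CHAR('a) = 1"
    using assms(2) by (simp add: has_mult_order_def power_mult mult.commute)
  then have "s ^ e = 1"
    using power_CHAR_eq_1_iff[OF assms(1)] by blast
  moreover have "0 < e" "e < n"
    using assms n prime_gt_1_nat[OF assms(1)] by (auto simp: has_mult_order_def)
  ultimately show False
    using assms(2) by (auto simp: has_mult_order_def)
qed

lemma card_has_mult_order_prime_CHAR:
  assumes "prime CHAR('a::alg_closed_field)" and "n > 0"
  shows "card {s::'a. has_mult_order s n} = (if coprime n CHAR('a) then totient n else 0)"
proof (cases "CHAR('a) dvd n")
  case True
  then have "{s::'a. has_mult_order s n} = {}"
    using has_mult_order_imp_not_CHAR_dvd[OF assms(1)] by blast
  then show ?thesis
    using True assms(1) by (auto dest: coprime_common_divisor simp: prime_gt_1_nat)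
next
  case False
  then have "of_nat n \<noteq> (0::'a)"
    by (simp add: of_nat_eq_0_iff_char_dvd)
  moreover have "coprime n CHAR('a)"
    using prime_imp_coprime[OF assms(1) False] by (simp add: coprime_commute)
  ultimately show ?thesis
    by (simp add: card_has_mult_order_alg_closed)
qed

lemma of_nat_nonzero_if_three_mul_eq_CHAR_power_Suc:
  assumes "prime CHAR('a::semiring_1)" and "q = CHAR('a) ^ k" and "3 * m = q + 1"
  shows "of_nat (q + 1) \<noteq> (0::'a)" and "of_nat m \<noteq> (0::'a)" and "(3::'a) \<noteq> 0"
proof -
  have "k > 0"
  proof (rule ccontr)
    assume "\<not> k > 0"
    then have "3 * m = 2"
      using assms(2,3) by simp
    then show False
      by presburger
  qed
  show "of_nat (q + 1) \<noteq> (0::'a)"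
  proof
    assume "of_nat (q + 1) = (0::'a)"
    then have "CHAR('a) dvd q + 1"
      by (simp only: of_nat_eq_0_iff_char_dvd)
    moreover have "CHAR('a) dvd q"
      using assms(2) \<open>k > 0\<close> by simp
    ultimately have "CHAR('a) dvd 1"
      by (metis dvd_add_right_iff)
    with assms(1) show False
      by simp
  qed
  then have "3 * of_nat m \<noteq> (0::'a)"
    unfolding assms(3)[symmetric] by simp
  then show "of_nat m \<noteq> (0::'a)" and "(3::'a) \<noteq> 0"
    by auto
qed

lemma power_eq_self_iff:
  fixes y :: "'a::idom"
  assumes "y \<noteq> 0" and "n > 0"
  shows "y ^ n = y \<longleftrightarrow> y ^ (n - 1) = 1"
proof -
  have "y ^ n = y * y ^ (n - 1)"
    using assms(2) by (simp add: power_eq_if)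
  then show ?thesis
    using assms(1) by (metis mult.right_neutral mult_left_cancel)
qed

lemma power_square_eq_self_iff:
  fixes y :: "'a::idom"
  assumes "y \<noteq> 0" and "q > 0"
  shows "y ^ (q ^ 2) = y \<longleftrightarrow> (y ^ (q + 1)) ^ (q - 1) = 1"
proof -
  have "q ^ 2 - 1 = (q + 1) * (q - 1)"
    by (simp add: power2_eq_square algebra_simps)
  then have "y ^ (q ^ 2 - 1) = (y ^ (q + 1)) ^ (q - 1)"
    by (simp only: power_mult)
  then show ?thesis
    using power_eq_self_iff[OF assms(1), of "q ^ 2"] assms(2) by simp
qed

lemma eq_cube_root_if_scaled_quadratic_eq:
  fixes u v :: "'a::idom"
  assumes "v ^ 3 = 1" and "v \<noteq> 1" and "u \<noteq> 0" and "(v * u) ^ 2 + v * u = u ^ 2 + u"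
  shows "u = v"
proof -
  have "u * ((v - 1) * ((v + 1) * u + 1)) = ((v * u) ^ 2 + v * u) - (u ^ 2 + u)"
    by (simp add: algebra_simps power2_eq_square)
  then have "(v + 1) * u + 1 = 0"
    using assms(2-4) by simp
  moreover have "v + 1 = - (v ^ 2)"
    using cube_root_unity_sum[OF assms(1,2)] by (simp add: eq_neg_iff_add_eq_0 add_ac)
  ultimately have "v ^ 2 * u = 1"
    by (simp add: eq_neg_iff_add_eq_0[symmetric])
  moreover have "v * (v ^ 2 * u) = v ^ 3 * u"
    by (simp add: power2_eq_square power3_eq_cube)
  ultimately show "u = v"
    using assms(1) by simp
qed

lemma Frobenius_quadratic_fixed_iff:
  fixes u :: "'a::field"
  assumes "prime CHAR('a)" and "q = CHAR('a) ^ k" and "u \<noteq> 0" and "1 + u \<noteq> 0"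
  shows "(u ^ (q - 1)) ^ 3 = 1 \<and> (u ^ 2 + u) ^ q = u ^ 2 + u \<longleftrightarrow> u ^ 2 + u + 1 = 0 \<or> u ^ q = u"
proof -
  define v where "v = u ^ (q - 1)"
  have "q > 0"
    using assms(1,2) prime_gt_0_nat by simp
  then have uq: "u ^ q = v * u"
    by (simp add: v_def power_eq_if)
  have frob: "(u ^ 2 + u) ^ q = (u ^ q) ^ 2 + u ^ q"
    using freshmans_dream'[OF assms(1,2)] by (simp add: power_mult[symmetric] mult.commute)
  show ?thesis
  proof
    assume "(u ^ (q - 1)) ^ 3 = 1 \<and> (u ^ 2 + u) ^ q = u ^ 2 + u"
    then have "v ^ 3 = 1" and fixed: "(v * u) ^ 2 + v * u = u ^ 2 + u"
      using frob uq by (simp_all add: v_def)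
    show "u ^ 2 + u + 1 = 0 \<or> u ^ q = u"
    proof (cases "v = 1")
      case False
      then have "u = v"
        using eq_cube_root_if_scaled_quadratic_eq \<open>v ^ 3 = 1\<close> assms(3) fixed by blast
      then show ?thesis
        using cube_root_unity_sum[OF \<open>v ^ 3 = 1\<close> False] by simp
    qed (simp add: uq)
  next
    assume "u ^ 2 + u + 1 = 0 \<or> u ^ q = u"
    then show "(u ^ (q - 1)) ^ 3 = 1 \<and> (u ^ 2 + u) ^ q = u ^ 2 + u"
    proof
      assume u2: "u ^ 2 + u + 1 = 0"
      then have "u ^ 3 = 1"
        by (rule cube_eq_1_if_quadratic_eq_0)
      moreover from u2 have "u ^ 2 + u = - 1"
        by (simp add: eq_neg_iff_add_eq_0)
      moreover have "(u ^ (q - 1)) ^ 3 = (u ^ 3) ^ (q - 1)"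
        by (simp flip: power_mult add: mult.commute)
      ultimately show ?thesis
        using freshmans_dream_minus[OF assms(1,2), of 1] by simp
    next
      assume "u ^ q = u"
      then have "v = 1"
        using uq assms(3) by simp
      then show ?thesis
        using uq \<open>u ^ q = u\<close> frob by (simp add: v_def)
    qed
  qed
qed

lemma Frobenius_fixed_divide_one_plus_iff:
  fixes u :: "'a::field"
  assumes "prime CHAR('a)" and "q = CHAR('a) ^ k" and "1 + u \<noteq> 0"
  shows "(u / (1 + u)) ^ q = u / (1 + u) \<longleftrightarrow> u ^ q = u"
proof -
  have "(1 + u) ^ q = 1 + u ^ q"
    using freshmans_dream'[OF assms(1,2)] by simp
  then have "1 + u ^ q \<noteq> 0"
    using assms(3) by (metis power_not_zero)
  have "(u / (1 + u)) ^ q = u / (1 + u) \<longleftrightarrow> u ^ q / (1 + u ^ q) = u / (1 + u)"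
    by (simp add: power_divide \<open>(1 + u) ^ q = 1 + u ^ q\<close>)
  also have "\<dots> \<longleftrightarrow> u ^ q * (1 + u) = u * (1 + u ^ q)"
    using \<open>1 + u ^ q \<noteq> 0\<close> assms(3) by (simp add: frac_eq_eq)
  also have "\<dots> \<longleftrightarrow> u ^ q = u"
    by (simp add: algebra_simps)
  finally show ?thesis .
qed

lemma divide_one_plus_quadratic_eq_0_iff:
  fixes u :: "'a::field"
  assumes "1 + u \<noteq> 0"
  shows "(u / (1 + u)) ^ 2 - u / (1 + u) + 1 = 0 \<longleftrightarrow> u ^ 2 + u + 1 = 0"
proof -
  define x where "x = u / (1 + u)"
  have "x * (1 + u) = u"
    using assms by (simp add: x_def)
  have "(x ^ 2 - x + 1) * (1 + u) ^ 2 = (x * (1 + u)) ^ 2 - x * (1 + u) * (1 + u) + (1 + u) ^ 2"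
    by (simp add: algebra_simps power2_eq_square)
  also have "\<dots> = u ^ 2 + u + 1"
    unfolding \<open>x * (1 + u) = u\<close> by (simp add: algebra_simps power2_eq_square)
  finally have "(x ^ 2 - x + 1) * (1 + u) ^ 2 = u ^ 2 + u + 1" .
  moreover have "(1 + u) ^ 2 \<noteq> 0"
    using assms by simp
  ultimately show ?thesis
    unfolding x_def by (metis mult_eq_0_iff)
qed

section \<open>The curve and the map \<alpha>\<close>

lemma card_fibres_const:
  assumes "\<And>y. y \<in> B \<Longrightarrow> card {x \<in> A. f x = y} = k" and "k > 0"
  shows "card {x \<in> A. f x \<in> B} = k * card B"
proof (cases "finite B")
  case True
  have "{x \<in> A. f x \<in> B} = (\<Union>y\<in>B. {x \<in> A. f x = y})"
    by blast
  also have "card \<dots> = (\<Sum>y\<in>B. card {x \<in> A. f x = y})"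
    by (rule card_UN_disjoint) (use True assms card_ge_0_finite in auto)
  finally show ?thesis
    using assms(1) by simp
next
  case False
  have "B \<subseteq> f ` {x \<in> A. f x \<in> B}"
  proof
    fix y
    assume "y \<in> B"
    then have "card {x \<in> A. f x = y} > 0"
      using assms by simp
    then have "{x \<in> A. f x = y} \<noteq> {}"
      by (simp add: card_gt_0_iff)
    then show "y \<in> f ` {x \<in> A. f x \<in> B}"
      using \<open>y \<in> B\<close> by blast
  qed
  then have "infinite {x \<in> A. f x \<in> B}"
    using False finite_surj by blast
  then show ?thesis
    using False by simp
qed

lemma curve_pt_notO_iff:
  "curve_pt_notO q m a b \<longleftrightarrow> b ^ (q + 1) = - ((a ^ m) ^ 2 + a ^ m) \<and> a \<noteq> 0 \<and> 1 + a ^ m \<noteq> 0"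
proof -
  have "a ^ (2 * m) = (a ^ m) ^ 2"
    by (simp add: power_mult[symmetric] mult.commute)
  then have "curve_pt_notO q m a b \<longleftrightarrow> b ^ (q + 1) + ((a ^ m) ^ 2 + a ^ m) = 0 \<and> a \<noteq> 0 \<and> 1 + a ^ m \<noteq> 0"
    by (simp add: curve_pt_notO_def add_ac)
  then show ?thesis
    by (simp only: eq_neg_iff_add_eq_0)
qed

lemma curve_pt_notO_alpha_iff:
  fixes x :: "'a::field"
  assumes "x \<noteq> 0" and "x \<noteq> 1" and "m > 0"
  defines "c \<equiv> x / (1 - x)"
  shows "curve_pt_notO q m a b \<and> alpha_pt m a = x \<longleftrightarrow> a ^ m = c \<and> b ^ (q + 1) = - (c ^ 2 + c)"
proof -
  have "c \<noteq> 0" and "1 + c \<noteq> 0"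
    using assms(1,2) by (auto simp: c_def field_simps)
  have alpha_eq: "u / (1 + u) = x \<longleftrightarrow> u = c" if "1 + u \<noteq> 0" for u
    using that assms(2) by (auto simp: c_def field_simps)
  show ?thesis
    using alpha_eq[of "a ^ m"] \<open>c \<noteq> 0\<close> \<open>1 + c \<noteq> 0\<close> \<open>m > 0\<close>
    by (auto simp: curve_pt_notO_iff alpha_pt_def power_0_left)
qed

lemma card_curve_fibre_alpha:
  fixes x :: "'a::alg_closed_field"
  assumes "x \<noteq> 0" and "x \<noteq> 1" and "of_nat m \<noteq> (0::'a)" and "of_nat (q + 1) \<noteq> (0::'a)"
  shows "card {(a, b). curve_pt_notO q m a b \<and> alpha_pt m a = x} = m * (q + 1)"
proof -
  define c where "c = x / (1 - x)"
  have "m > 0"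
    using assms(3) by (rule contrapos_np) simp
  have "c \<noteq> 0" and "1 + c \<noteq> 0"
    using assms(1,2) by (auto simp: c_def field_simps)
  moreover have "- (c ^ 2 + c) = - (c * (1 + c))"
    by (simp add: algebra_simps power2_eq_square)
  ultimately have "- (c ^ 2 + c) \<noteq> 0"
    by simp
  have "{(a, b). curve_pt_notO q m a b \<and> alpha_pt m a = x} = {a. a ^ m = c} \<times> {b. b ^ (q + 1) = - (c ^ 2 + c)}"
    using curve_pt_notO_alpha_iff[OF assms(1,2) \<open>m > 0\<close>] by (auto simp: c_def)
  then show ?thesis
    using card_nth_roots_alg_closed[of c m] card_nth_roots_alg_closed[of "- (c ^ 2 + c)" "q + 1"]
      \<open>c \<noteq> 0\<close> \<open>- (c ^ 2 + c) \<noteq> 0\<close> assms(3,4)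
    by (simp add: card_cartesian_product)
qed

lemma card_curve_points_alpha_in:
  fixes X :: "'a::alg_closed_field set"
  assumes "0 \<notin> X" and "1 \<notin> X" and "of_nat m \<noteq> (0::'a)" and "of_nat (q + 1) \<noteq> (0::'a)"
  shows "card {(a, b). curve_pt_notO q m a b \<and> alpha_pt m a \<in> X} = m * (q + 1) * card X"
proof -
  have "m > 0"
    using assms(3) by (rule contrapos_np) simp
  have "card {ab \<in> {(a, b). curve_pt_notO q m a b}. alpha_pt m (fst ab) \<in> X} = m * (q + 1) * card X"
  proof (rule card_fibres_const)
    fix x
    assume "x \<in> X"
    then have "x \<noteq> 0" and "x \<noteq> 1"
      using assms(1,2) by auto
    moreover have "{ab \<in> {(a, b). curve_pt_notO q m a b}. alpha_pt m (fst ab) = x}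
        = {(a, b). curve_pt_notO q m a b \<and> alpha_pt m a = x}"
      by auto
    ultimately show "card {ab \<in> {(a, b). curve_pt_notO q m a b}. alpha_pt m (fst ab) = x} = m * (q + 1)"
      using card_curve_fibre_alpha[OF _ _ assms(3,4)] by simp
  qed (use \<open>m > 0\<close> in simp)
  moreover have "{ab \<in> {(a, b). curve_pt_notO q m a b}. alpha_pt m (fst ab) \<in> X}
      = {(a, b). curve_pt_notO q m a b \<and> alpha_pt m a \<in> X}"
    by auto
  ultimately show ?thesis
    by simp
qed

lemma curve_pt_rational_iff_alpha:
  fixes a b :: "'a::field"
  assumes "prime CHAR('a)" and "q = CHAR('a) ^ k" and "3 * m = q + 1" and "curve_pt_notO q m a b"
  defines "x \<equiv> alpha_pt m a"
  shows "(a ^ (q ^ 2) = a \<and> b ^ (q ^ 2) = b) \<longleftrightarrow> x ^ 2 - x + 1 = 0 \<or> x ^ q = x"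
proof -
  define u where "u = a ^ m"
  have "a \<noteq> 0" and "1 + u \<noteq> 0" and b_curve: "b ^ (q + 1) = - (u ^ 2 + u)"
    using assms(4) by (simp_all add: curve_pt_notO_iff u_def)
  have "u \<noteq> 0"
    using \<open>a \<noteq> 0\<close> by (simp add: u_def)
  have "- (u ^ 2 + u) = - (u * (1 + u))"
    by (simp add: algebra_simps power2_eq_square)
  then have "- (u ^ 2 + u) \<noteq> 0"
    using \<open>u \<noteq> 0\<close> \<open>1 + u \<noteq> 0\<close> by simp
  then have "b \<noteq> 0"
    unfolding b_curve[symmetric] by (rule contrapos_nn) simp
  have "q > 0"
    using assms(1,2) prime_gt_0_nat by simp
  have "(a ^ (q + 1)) ^ (q - 1) = (u ^ (q - 1)) ^ 3"
    unfolding assms(3)[symmetric] u_def by (simp only: power_mult[symmetric] ac_simps)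
  then have "a ^ (q ^ 2) = a \<longleftrightarrow> (u ^ (q - 1)) ^ 3 = 1"
    using power_square_eq_self_iff[OF \<open>a \<noteq> 0\<close> \<open>q > 0\<close>] by simp
  moreover have "b ^ (q ^ 2) = b \<longleftrightarrow> (u ^ 2 + u) ^ q = u ^ 2 + u"
  proof -
    have "b ^ (q ^ 2) = b \<longleftrightarrow> (- (u ^ 2 + u)) ^ (q - 1) = 1"
      using power_square_eq_self_iff[OF \<open>b \<noteq> 0\<close> \<open>q > 0\<close>] by (simp only: b_curve)
    also have "\<dots> \<longleftrightarrow> (- (u ^ 2 + u)) ^ q = - (u ^ 2 + u)"
      using power_eq_self_iff[OF \<open>- (u ^ 2 + u) \<noteq> 0\<close> \<open>q > 0\<close>] by simp
    also have "\<dots> \<longleftrightarrow> (u ^ 2 + u) ^ q = u ^ 2 + u"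
      by (simp only: freshmans_dream_minus[OF assms(1,2)] neg_equal_iff_equal)
    finally show ?thesis .
  qed
  ultimately have "(a ^ (q ^ 2) = a \<and> b ^ (q ^ 2) = b) \<longleftrightarrow> u ^ 2 + u + 1 = 0 \<or> u ^ q = u"
    using Frobenius_quadratic_fixed_iff[OF assms(1,2) \<open>u \<noteq> 0\<close> \<open>1 + u \<noteq> 0\<close>] by simp
  moreover have "x = u / (1 + u)"
    by (simp add: x_def alpha_pt_def u_def)
  ultimately show ?thesis
    using divide_one_plus_quadratic_eq_0_iff[OF \<open>1 + u \<noteq> 0\<close>]
      Frobenius_fixed_divide_one_plus_iff[OF assms(1,2) \<open>1 + u \<noteq> 0\<close>] by simp
qed

section \<open>The Moebius transformation behind the \<P>-order\<close>

definition moebius :: "'a::field \<Rightarrow> 'a \<Rightarrow> 'a" where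
  "moebius z x = (x + z) / (x + z ^ 2)"

context
  fixes z :: "'a::field"
  assumes z_cube: "z ^ 3 = 1" and z_ne_1: "z \<noteq> 1"
begin

lemma cube_root_neq: "z \<noteq> 0" "z ^ 2 \<noteq> z" "z ^ 2 \<noteq> 1"
proof -
  show "z \<noteq> 0"
    using z_cube by auto
  have "z ^ 3 = z * z ^ 2"
    by (simp add: power2_eq_square power3_eq_cube)
  then show "z ^ 2 \<noteq> 1"
    using z_cube z_ne_1 by auto
  show "z ^ 2 \<noteq> z"
    using \<open>z \<noteq> 0\<close> z_ne_1 by (simp add: power2_eq_square)
qed

lemma quadratic_eq_cube_root_factors: "x ^ 2 - x + 1 = (x + z) * (x + z ^ 2)"
proof -
  have "z ^ 2 + z = - 1"
    using cube_root_unity_sum[OF z_cube z_ne_1] by (simp add: eq_neg_iff_add_eq_0)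
  have "(x + z) * (x + z ^ 2) = x ^ 2 + (z ^ 2 + z) * x + z ^ 3"
    by (simp add: algebra_simps power2_eq_square power3_eq_cube)
  also have "\<dots> = x ^ 2 - x + 1"
    using \<open>z ^ 2 + z = - 1\<close> z_cube by simp
  finally show ?thesis ..
qed

lemma cube_root_power_eq_square:
  assumes "3 * m = q + 1"
  shows "z ^ q = z ^ 2"
proof -
  have "z ^ q * z = (z ^ 3) ^ m"
    by (simp only: power_Suc2[symmetric] Suc_eq_plus1 assms[symmetric] power_mult)
  also have "\<dots> = z ^ 2 * z"
    using z_cube by (simp flip: power_Suc2)
  finally show ?thesis
    using cube_root_neq by simp
qed

lemma Ppoly_eq_0_iff_moebius:
  assumes "(3::'a) \<noteq> 0" and "x \<notin> {0, 1, -z, -(z ^ 2)}"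
  shows "Ppoly z n x = 0 \<longleftrightarrow> moebius z x ^ (3 * n) = 1"
proof -
  have "3 * (z - z ^ 2) * x * (x - 1) \<noteq> 0" and "x + z ^ 2 \<noteq> 0"
    using assms cube_root_neq by (auto simp: add_eq_0_iff)
  then show ?thesis
    by (simp add: Ppoly_def moebius_def power_divide)
qed

lemma moebius_nonzero_and_cube_ne_1:
  assumes "x \<notin> {0, 1, -z, -(z ^ 2)}"
  shows "moebius z x \<noteq> 0" and "moebius z x ^ 3 \<noteq> 1"
proof -
  have "x + z \<noteq> 0" and den: "x + z ^ 2 \<noteq> 0"
    using assms by (auto simp: add_eq_0_iff)
  then show "moebius z x \<noteq> 0"
    by (simp add: moebius_def)
  show "moebius z x ^ 3 \<noteq> 1"
  proof
    assume "moebius z x ^ 3 = 1"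
    moreover have "x + z = moebius z x * (x + z ^ 2)"
      using den by (simp add: moebius_def)
    ultimately consider "x + z = x + z ^ 2" | "x + z = z * (x + z ^ 2)" | "x + z = z ^ 2 * (x + z ^ 2)"
      using cube_roots_unity_cases[OF z_cube z_ne_1] by force
    then show False
    proof cases
      case 1
      then show False
        using cube_root_neq by simp
    next
      case 2
      have "z * (x + z ^ 2) = z * x + z ^ 3"
        by (simp add: algebra_simps power2_eq_square power3_eq_cube)
      with 2 have "(x - 1) * (1 - z) = 0"
        using z_cube by (simp add: algebra_simps)
      then show False
        using assms z_ne_1 by simp
    next
      case 3
      have "z ^ 2 * (x + z ^ 2) = z ^ 2 * x + z ^ 3 * z"
        by (simp add: algebra_simps power2_eq_square power3_eq_cube)
      with 3 have "x * (1 - z ^ 2) = 0"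
        using z_cube by (simp add: algebra_simps)
      then show False
        using assms cube_root_neq by simp
    qed
  qed
qed

lemma moebius_inverse:
  assumes "t \<noteq> 0" and "t ^ 3 \<noteq> 1"
  defines "x \<equiv> (z - t * z ^ 2) / (t - 1)"
  shows "x \<notin> {0, 1, -z, -(z ^ 2)}" and "moebius z x = t"
proof -
  have "t \<noteq> 1" and "z - z ^ 2 \<noteq> 0"
    using assms(2) cube_root_neq by auto
  then have num: "x + z = t * (z - z ^ 2) / (t - 1)" and den: "x + z ^ 2 = (z - z ^ 2) / (t - 1)"
    by (simp_all add: x_def field_simps)
  then show "moebius z x = t"
    using \<open>t \<noteq> 1\<close> \<open>z - z ^ 2 \<noteq> 0\<close> by (simp add: moebius_def)
  have "x \<noteq> 0"
  proof
    assume "x = 0"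
    then have "t * z ^ 2 = z"
      by (simp add: x_def \<open>t \<noteq> 1\<close>)
    then have "(t * z) ^ 3 = 1"
      using cube_root_neq z_cube by (simp add: power2_eq_square)
    then show False
      using assms(2) z_cube by (simp add: power_mult_distrib)
  qed
  moreover have "x \<noteq> 1"
  proof
    assume "x = 1"
    then have "z - t * z ^ 2 = t - 1"
      using \<open>t \<noteq> 1\<close> by (simp add: x_def field_simps)
    then have "t * (z ^ 2 + 1) = z + 1"
      by (simp add: algebra_simps)
    moreover have "z ^ 2 + 1 = - z" and "z + 1 = - (z * z)"
      using cube_root_unity_sum[OF z_cube z_ne_1] by (simp_all add: power2_eq_square eq_neg_iff_add_eq_0 add_ac)
    ultimately have "t * z = z * z"
      by simp
    then have "t = z"
      using cube_root_neq by simp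
    then show False
      using assms(2) z_cube by simp
  qed
  ultimately show "x \<notin> {0, 1, -z, -(z ^ 2)}"
    using num den assms(1) \<open>t \<noteq> 1\<close> \<open>z - z ^ 2 \<noteq> 0\<close> by (auto simp: add_eq_0_iff)
qed

lemma inj_on_moebius: "inj_on (moebius z) (- {-(z ^ 2)})"
proof (rule inj_onI)
  fix x y
  assume "x \<in> - {-(z ^ 2)}" "y \<in> - {-(z ^ 2)}" and eq: "moebius z x = moebius z y"
  then have "x + z ^ 2 \<noteq> 0" "y + z ^ 2 \<noteq> 0"
    by (auto simp: add_eq_0_iff)
  with eq have "(x + z) * (y + z ^ 2) = (y + z) * (x + z ^ 2)"
    by (simp add: moebius_def frac_eq_eq)
  moreover have "(x + z) * (y + z ^ 2) - (y + z) * (x + z ^ 2) = (x - y) * (z ^ 2 - z)"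
    by (simp add: algebra_simps)
  ultimately show "x = y"
    using cube_root_neq by simp
qed

lemma moebius_image: "moebius z ` (- {0, 1, -z, -(z ^ 2)}) = {t. t \<noteq> 0 \<and> t ^ 3 \<noteq> 1}"
proof (intro equalityI subsetI)
  fix t :: 'a
  assume "t \<in> {t. t \<noteq> 0 \<and> t ^ 3 \<noteq> 1}"
  then show "t \<in> moebius z ` (- {0, 1, -z, -(z ^ 2)})"
    using moebius_inverse[of t] by (intro image_eqI[where x = "(z - t * z ^ 2) / (t - 1)"]) auto
qed (use moebius_nonzero_and_cube_ne_1 in auto)

lemma has_P_order_iff_has_mult_order:
  assumes "(3::'a) \<noteq> 0" and "i > 0"
  shows "has_P_order z x i \<longleftrightarrow>
           x \<notin> {0, 1, -z, -(z ^ 2)} \<and> has_mult_order (moebius z x ^ 3) (i + 1)"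
proof (cases "x \<in> {0, 1, -z, -(z ^ 2)}")
  case False
  have "moebius z x ^ 3 \<noteq> 1"
    using moebius_nonzero_and_cube_ne_1[OF False] by simp
  then show ?thesis
    using False assms(2) Ppoly_eq_0_iff_moebius[OF assms(1) False]
    by (simp add: has_P_order_def has_mult_order_Suc_iff power_mult del: One_nat_def)
qed (simp add: has_P_order_def)

lemma moebius_power_Suc_eq_1_iff:
  assumes "prime CHAR('a)" and "q = CHAR('a) ^ k" and "z ^ q = z ^ 2"
    and "x \<notin> {0, 1, -z, -(z ^ 2)}"
  shows "moebius z x ^ (q + 1) = 1 \<longleftrightarrow> x ^ q = x"
proof -
  note frob = freshmans_dream'[OF assms(1,2)]
  have "(z ^ 2) ^ q = (z ^ q) ^ 2"
    by (simp flip: power_mult add: mult.commute)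
  also have "\<dots> = z ^ 3 * z"
    by (simp add: assms(3) flip: power_mult power_Suc2)
  finally have num: "(x + z) ^ q = x ^ q + z ^ 2" and den: "(x + z ^ 2) ^ q = x ^ q + z"
    using frob assms(3) z_cube by simp_all
  have "x + z \<noteq> 0" and "x + z ^ 2 \<noteq> 0"
    using assms(4) by (auto simp: add_eq_0_iff)
  then have "x ^ q + z \<noteq> 0"
    using den by (metis power_not_zero)
  have "moebius z x ^ (q + 1) = ((x + z) * (x ^ q + z ^ 2)) / ((x + z ^ 2) * (x ^ q + z))"
    by (simp add: moebius_def power_divide num den)
  then have "moebius z x ^ (q + 1) = 1 \<longleftrightarrow> (x + z) * (x ^ q + z ^ 2) = (x + z ^ 2) * (x ^ q + z)"
    using \<open>x ^ q + z \<noteq> 0\<close> \<open>x + z ^ 2 \<noteq> 0\<close> by simp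
  also have "\<dots> \<longleftrightarrow> (x ^ q - x) * (z - z ^ 2) = 0"
    by (simp add: algebra_simps)
  also have "\<dots> \<longleftrightarrow> x ^ q = x"
    using cube_root_neq by simp
  finally show ?thesis .
qed

lemma ex_has_P_order_dvd_iff:
  assumes "(3::'a) \<noteq> 0" and "m > 0" and "x \<notin> {0, 1, -z, -(z ^ 2)}"
  shows "(\<exists>j. has_P_order z x j \<and> (j + 1) dvd m) \<longleftrightarrow> (moebius z x ^ 3) ^ m = 1"
proof
  assume "\<exists>j. has_P_order z x j \<and> (j + 1) dvd m"
  then obtain j where "has_P_order z x j" and "(j + 1) dvd m"
    by blast
  then have "has_mult_order (moebius z x ^ 3) (j + 1)"
    using has_P_order_iff_has_mult_order[OF assms(1)] by (auto simp: has_P_order_def)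
  with \<open>(j + 1) dvd m\<close> show "(moebius z x ^ 3) ^ m = 1"
    by (simp add: has_mult_order_power_eq_1_iff)
next
  assume "(moebius z x ^ 3) ^ m = 1"
  then obtain d where d: "has_mult_order (moebius z x ^ 3) d" and "d dvd m"
    using assms(2) by (rule has_mult_order_exists_dvd)
  have "d \<noteq> 1"
    using d moebius_nonzero_and_cube_ne_1[OF assms(3)] by (auto simp: has_mult_order_def)
  then have "d - 1 > 0" and "d - 1 + 1 = d"
    using d by (auto simp: has_mult_order_def)
  then have "has_P_order z x (d - 1)"
    using has_P_order_iff_has_mult_order[OF assms(1)] assms(3) d by simp
  with \<open>d dvd m\<close> \<open>d - 1 + 1 = d\<close> show "\<exists>j. has_P_order z x j \<and> (j + 1) dvd m"
    by metis
qed

lemma curve_pt_rational_iff: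
  assumes "prime CHAR('a)" and "q = CHAR('a) ^ k" and "3 * m = q + 1" and "curve_pt_notO q m a b"
  defines "x \<equiv> alpha_pt m a"
  shows "(a ^ (q ^ 2) = a \<and> b ^ (q ^ 2) = b) \<longleftrightarrow>
           x ^ 2 - x + 1 = 0 \<or> (\<exists>j. has_P_order z x j \<and> (j + 1) dvd m)"
proof -
  have "(3::'a) \<noteq> 0" and "m > 0"
    using of_nat_nonzero_if_three_mul_eq_CHAR_power_Suc[OF assms(1-3)] by (auto intro: gr0I)
  have "z ^ q = z ^ 2"
    using cube_root_power_eq_square[OF assms(3)] .
  have "x ^ q = x \<longleftrightarrow> (\<exists>j. has_P_order z x j \<and> (j + 1) dvd m)" if "x ^ 2 - x + 1 \<noteq> 0"
  proof -
    have "a ^ m \<noteq> 0" and "1 + a ^ m \<noteq> 0"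
      using assms(4) by (simp_all add: curve_pt_notO_iff)
    then have "x \<noteq> 0" and "x \<noteq> 1"
      by (auto simp: x_def alpha_pt_def)
    moreover have "x ^ 2 - x + 1 = (x + z) * (x + z ^ 2)"
      by (rule quadratic_eq_cube_root_factors)
    ultimately have adm: "x \<notin> {0, 1, -z, -(z ^ 2)}"
      using that by auto
    have "x ^ q = x \<longleftrightarrow> moebius z x ^ (q + 1) = 1"
      using moebius_power_Suc_eq_1_iff[OF assms(1,2) \<open>z ^ q = z ^ 2\<close> adm] by simp
    also have "\<dots> \<longleftrightarrow> (moebius z x ^ 3) ^ m = 1"
      by (simp only: assms(3)[symmetric] power_mult)
    finally show ?thesis
      using ex_has_P_order_dvd_iff[OF \<open>(3::'a) \<noteq> 0\<close> \<open>m > 0\<close> adm] by simp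
  qed
  then show ?thesis
    using curve_pt_rational_iff_alpha[OF assms(1-4)] by (auto simp: x_def)
qed

end

lemma card_has_P_order:
  fixes z :: "'a::alg_closed_field"
  assumes "z ^ 3 = 1" and "z \<noteq> 1" and "(3::'a) \<noteq> 0" and "i > 0"
  shows "card {x. has_P_order z x i} = 3 * card {s::'a. has_mult_order s (i + 1)}"
proof -
  define E where "E = {0, 1, -z, -(z ^ 2)}"
  define T where "T = {t::'a. has_mult_order (t ^ 3) (i + 1)}"
  have "T \<subseteq> {t. t \<noteq> 0 \<and> t ^ 3 \<noteq> 1}"
    using has_mult_order_nonzero has_mult_order_ne_1 assms(4) by (fastforce simp: T_def)
  then have "T \<subseteq> moebius z ` (- E)"
    unfolding E_def moebius_image[OF assms(1,2)] .
  then have "moebius z ` {x \<in> - E. moebius z x \<in> T} = T"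
    by blast
  moreover have "inj_on (moebius z) {x \<in> - E. moebius z x \<in> T}"
    by (rule inj_on_subset[OF inj_on_moebius[OF assms(1,2)]]) (auto simp: E_def)
  moreover have "{x. has_P_order z x i} = {x \<in> - E. moebius z x \<in> T}"
    using has_P_order_iff_has_mult_order[OF assms] by (auto simp: E_def T_def)
  ultimately have "card {x. has_P_order z x i} = card T"
    by (metis card_image)
  also have "card T = card {t \<in> UNIV. t ^ 3 \<in> {s::'a. has_mult_order s (i + 1)}}"
    by (simp add: T_def)
  also have "\<dots> = 3 * card {s::'a. has_mult_order s (i + 1)}"
  proof (rule card_fibres_const)
    fix s :: 'a
    assume "s \<in> {s. has_mult_order s (i + 1)}"
    then have "s \<noteq> 0"
      using has_mult_order_nonzero by blast
    then show "card {t \<in> UNIV. t ^ 3 = s} = 3"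
      using card_nth_roots_alg_closed[of s 3] assms(3) by simp
  qed simp
  finally show ?thesis .
qed

theorem lemma3p8:
  fixes z :: "'a::alg_closed_field" and p q k m i :: nat
  assumes "prime p" and "CHAR('a) = p"
    and "\<forall>x::'a. \<exists>n>0. x ^ (p ^ n) = x"
    and "k > 0" and "q = p ^ k" and "q mod 3 = 2" and "m = (q + 1) div 3"
    and "z ^ 3 = 1" and "z \<noteq> 1"
    and "i > 0"
  shows "card {(a, b). curve_pt_notO q m a b \<and> has_P_order z (alpha_pt m a) i}
           = (if coprime (i + 1) p then (q + 1) ^ 2 * totient (i + 1) else 0)
         \<and> (\<forall>a b. curve_pt_notO q m a b \<longrightarrow>
           ((a ^ (q ^ 2) = a \<and> b ^ (q ^ 2) = b) \<longleftrightarrow>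
            ((alpha_pt m a) ^ 2 - alpha_pt m a + 1 = 0 \<or>
             (\<exists>j. has_P_order z (alpha_pt m a) j \<and> (j + 1) dvd m))))"
proof -
  have char: "prime CHAR('a)" and q: "q = CHAR('a) ^ k"
    using assms(1,2,5) by simp_all
  have m: "3 * m = q + 1"
    using assms(6,7) by presburger
  note nonzero = of_nat_nonzero_if_three_mul_eq_CHAR_power_Suc[OF char q m]
  have "card {(a, b). curve_pt_notO q m a b \<and> has_P_order z (alpha_pt m a) i}
      = m * (q + 1) * card {x. has_P_order z x i}"
    using card_curve_points_alpha_in[OF _ _ nonzero(2,1), of "{x. has_P_order z x i}"]
    by (simp add: has_P_order_def)
  also have "\<dots> = (3 * m) * (q + 1) * card {s::'a. has_mult_order s (i + 1)}"
    using card_has_P_order[OF assms(8,9) nonzero(3) assms(10)] by simp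
  also have "\<dots> = (if coprime (i + 1) p then (q + 1) ^ 2 * totient (i + 1) else 0)"
    using card_has_mult_order_prime_CHAR[OF char, of "i + 1"] assms(2)
    by (simp add: m power2_eq_square)
  finally show ?thesis
    using curve_pt_rational_iff[OF assms(8,9) char q m] by blast
qed

end
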